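(* Let $t$, $q$, $r$ be integers with $q \geq 0$ and $2 \leq r \leq t-1$, and suppose that $x = tq + r$ is odd. Then there exists a coloring of the edges of the complete graph $K_x$ with $t$ colors such that every vertex is incident with at least $q$ edges of each color. *)

theory Defs
  imports Main
begin

definition edge_colouring :: "nat \<Rightarrow> nat \<Rightarrow> (nat set \<Rightarrow> nat) \<Rightarrow> bool" where
  "edge_colouring x t c \<longleftrightarrow> (\<forall>u<x. \<forall>v<x. u \<noteq> v \<longrightarrow> c {u, v} < t)"

definition colour_degree :: "nat \<Rightarrow> (nat set \<Rightarrow> nat) \<Rightarrow> nat \<Rightarrow> nat \<Rightarrow> nat" where
  "colour_degree x c v i = card {u. u < x \<and> u \<noteq> v \<and> c {u, v} = i}"

end

theory Submission
  imports Defs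
begin

text \<open>Colour the edge \<open>{u, v}\<close> of \<open>K\<^sub>x\<close> according to its sum class \<open>s = (u + v) mod x\<close>, with
  colour \<open>(s - 2) mod t\<close> when \<open>s \<ge> 2\<close>. As \<open>x\<close> is odd, every sum class is a matching that
  misses only the vertex \<open>v\<close> with \<open>2 v \<equiv> s\<close>, and as \<open>t q + 2 \<le> x\<close> every colour \<open>i\<close> is
  carried by the \<open>q\<close> classes \<open>2 + i + t k\<close>, \<open>k < q\<close>. So a vertex sees each colour \<open>q\<close> times
  except possibly the colour of its one missing class \<open>2 v mod x\<close>. The classes 0 and 1 are
  spare: each vertex whose missing class is not spare owns one spare edge, which receives
  exactly that missing colour.\<close>

definition missing_colour :: "nat \<Rightarrow> nat \<Rightarrow> nat \<Rightarrow> nat" where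
  "missing_colour x t v = ((2 * v) mod x - 2) mod t"

text \<open>For \<open>a \<le> b\<close>: a spare edge of class 0 is owned by its larger endpoint, one of class 1
  by its smaller endpoint unless that is 0.\<close>

definition pair_colour :: "nat \<Rightarrow> nat \<Rightarrow> nat \<Rightarrow> nat \<Rightarrow> nat" where
  "pair_colour x t a b =
     (let s = (a + b) mod x in
      if s = 0 then missing_colour x t b
      else if s = 1 then (if a = 0 then missing_colour x t b else missing_colour x t a)
      else (s - 2) mod t)"

definition sum_colouring :: "nat \<Rightarrow> nat \<Rightarrow> nat set \<Rightarrow> nat" where
  "sum_colouring x t e = pair_colour x t (Min e) (Max e)"

lemma sum_colouring_doubleton: "sum_colouring x t {u, v} = pair_colour x t (min u v) (max u v)"
  unfolding sum_colouring_def by simp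

lemma sum_colouring_less: "0 < t \<Longrightarrow> sum_colouring x t e < t"
  unfolding sum_colouring_def pair_colour_def missing_colour_def Let_def by auto

lemma sum_colouring_eq_mod:
  assumes "2 \<le> (u + v) mod x"
  shows "sum_colouring x t {u, v} = ((u + v) mod x - 2) mod t"
proof -
  have "min u v + max u v = u + v" by auto
  then show ?thesis
    using assms unfolding sum_colouring_doubleton pair_colour_def Let_def by auto
qed

definition spare_partner :: "nat \<Rightarrow> nat \<Rightarrow> nat" where
  "spare_partner x v = (if 2 * v < x then (if v = 1 then 0 else x + 1 - v) else x - v)"

lemma spare_partner:
  assumes "odd x" "v < x" "2 \<le> (2 * v) mod x"
  defines "w \<equiv> spare_partner x v"
  shows "w < x" "w \<noteq> v" "(w + v) mod x < 2" "sum_colouring x t {w, v} = missing_colour x t v"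
proof -
  have "v \<noteq> 0" using assms(3) by (cases "v = 0") auto
  consider "v = 1" "2 * v < x" | "v \<noteq> 1" "2 * v < x" | "x < 2 * v"
    using \<open>odd x\<close> by fastforce
  then have "w < x \<and> w \<noteq> v \<and> (w + v) mod x < 2 \<and> sum_colouring x t {w, v} = missing_colour x t v"
  proof cases
    case 1
    then show ?thesis unfolding w_def spare_partner_def
      by (auto simp: sum_colouring_doubleton pair_colour_def)
  next
    case 2
    then have "x + 1 - v + v = x + 1" "1 < x" using \<open>v \<noteq> 0\<close> by auto
    then have "(x + 1 - v + v) mod x = 1" using mod_add_self1[of x 1] by simp
    moreover have "v < x + 1 - v" "x + 1 - v < x" using 2 \<open>v \<noteq> 0\<close> by auto
    ultimately show ?thesis using 2 \<open>v \<noteq> 0\<close> unfolding w_def spare_partner_def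
      by (auto simp: sum_colouring_doubleton pair_colour_def min_def max_def)
  next
    case 3
    moreover have "(x - v + v) mod x = 0" using assms(2) by simp
    ultimately show ?thesis using \<open>v \<noteq> 0\<close> assms(2) unfolding w_def spare_partner_def
      by (auto simp: sum_colouring_doubleton pair_colour_def min_def max_def)
  qed
  then show "w < x" "w \<noteq> v" "(w + v) mod x < 2"
    "sum_colouring x t {w, v} = missing_colour x t v" by auto
qed

definition sum_neighbour :: "nat \<Rightarrow> nat \<Rightarrow> nat \<Rightarrow> nat" where
  "sum_neighbour x v s = (if s = (2 * v) mod x then spare_partner x v else (s + x - v) mod x)"

lemma sum_neighbour_plus_mod:
  assumes "v < x" "s < x" "s \<noteq> (2 * v) mod x"
  shows "(sum_neighbour x v s + v) mod x = s"
proof -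
  have "(sum_neighbour x v s + v) mod x = (s + x - v + v) mod x"
    using assms(3) unfolding sum_neighbour_def by (simp add: mod_add_left_eq)
  also have "\<dots> = s" using assms(1,2) by simp
  finally show ?thesis .
qed

lemma sum_neighbour:
  assumes "odd x" "v < x" "2 \<le> s" "s < x"
  defines "u \<equiv> sum_neighbour x v s"
  shows "u < x" "u \<noteq> v" "sum_colouring x t {u, v} = (s - 2) mod t"
proof -
  have "u < x \<and> u \<noteq> v \<and> sum_colouring x t {u, v} = (s - 2) mod t"
  proof (cases "s = (2 * v) mod x")
    case True
    then show ?thesis using spare_partner[OF assms(1,2)] assms(3)
      unfolding u_def sum_neighbour_def missing_colour_def by simp
  next
    case False
    have "(u + v) mod x = s" using sum_neighbour_plus_mod[OF assms(2,4) False] u_def by simp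
    moreover have "u \<noteq> v" using False \<open>(u + v) mod x = s\<close> by (auto simp: mult_2)
    ultimately show ?thesis using sum_colouring_eq_mod[of u v x t] assms(2,3)
      unfolding u_def sum_neighbour_def using False by simp
  qed
  then show "u < x" "u \<noteq> v" "sum_colouring x t {u, v} = (s - 2) mod t" by auto
qed

lemma inj_on_sum_neighbour:
  assumes "odd x" "v < x"
  shows "inj_on (sum_neighbour x v) {2..<x}"
proof (rule inj_onI)
  fix s s' assume s: "s \<in> {2..<x}" and s': "s' \<in> {2..<x}"
    and eq: "sum_neighbour x v s = sum_neighbour x v s'"
  have spare: "(sum_neighbour x v s + v) mod x < 2" if "s \<in> {2..<x}" "s = (2 * v) mod x" for s
    using spare_partner(3)[OF assms] that unfolding sum_neighbour_def by auto
  show "s = s'"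
    using spare[OF s] spare[OF s'] sum_neighbour_plus_mod[OF assms(2)] s s' eq
    by (metis atLeastLessThan_iff not_less)
qed

lemma colour_degree_sum_colouring_ge:
  assumes "odd x" "v < x" "i < t" "t * q + 2 \<le> x"
  shows "q \<le> colour_degree x (sum_colouring x t) v i"
proof -
  define sums where "sums = (\<lambda>k. 2 + i + t * k) ` {..<q}"
  have "inj_on (\<lambda>k. 2 + i + t * k) {..<q}"
    using assms(3) by (intro inj_onI) simp
  then have "card sums = q" unfolding sums_def by (simp add: card_image)
  have sum_colour: "s \<in> {2..<x} \<and> (s - 2) mod t = i" if "s \<in> sums" for s
  proof -
    obtain k where "k < q" and s: "s = 2 + i + t * k" using \<open>s \<in> sums\<close> unfolding sums_def by auto
    have "t * k + i < t * Suc k" using assms(3) by simp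
    also have "\<dots> \<le> t * q" using \<open>k < q\<close> by (intro mult_le_mono2) simp
    finally show ?thesis using s assms(3,4) by simp
  qed
  then have sums_range: "sums \<subseteq> {2..<x}" by blast
  have "sum_neighbour x v ` sums \<subseteq> {u. u < x \<and> u \<noteq> v \<and> sum_colouring x t {u, v} = i}"
    using sum_neighbour[OF assms(1,2)] sum_colour by fastforce
  moreover have "inj_on (sum_neighbour x v) sums"
    using inj_on_subset[OF inj_on_sum_neighbour[OF assms(1,2)] sums_range] .
  ultimately have "card sums \<le> card {u. u < x \<and> u \<noteq> v \<and> sum_colouring x t {u, v} = i}"
    by (intro card_inj_on_le) auto
  then show ?thesis using \<open>card sums = q\<close> unfolding colour_degree_def by simp
qed

theorem lemma2:
  fixes t q r x :: nat
  assumes "2 \<le> r" and "r \<le> t - 1" and "x = t * q + r" and "odd x"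
  shows "\<exists>c. edge_colouring x t c \<and>
              (\<forall>v<x. \<forall>i<t. colour_degree x c v i \<ge> q)"
proof (intro exI[of _ "sum_colouring x t"] conjI allI impI)
  show "edge_colouring x t (sum_colouring x t)"
    using sum_colouring_less assms(1,2) unfolding edge_colouring_def by simp
  show "q \<le> colour_degree x (sum_colouring x t) v i" if "v < x" "i < t" for v i
    using colour_degree_sum_colouring_ge[OF assms(4) that] assms(1,3) by simp
qed

end
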